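(* Let $N\ge5$. Define $s:(0,\infty)\to(0,\infty)$ by $s(r)=\left((N-2)\int_r^\infty(\sinh\sigma)^{1-N}d\sigma\right)^{-\frac{1}{N-2}}$, so that $\frac{ds}{s^{N-1}}=\frac{dr}{(\sinh r)^{N-1}}$, let $r=r(s)$ be its inverse, and set $\rho(s)=\left(\frac{\sinh r(s)}{s}\right)^{2(N-1)}$. Then for every $v\in C_c^\infty(0,\infty)$, $$\int_0^\infty\frac{1}{\rho(s)}(\Delta v)^2s^{N-1}ds\ge\frac{(N-1)^4}{16}\int_0^\infty\rho(s)v^2s^{N-1}ds+\frac{9}{16}\int_0^\infty\frac{\rho(s)}{r^4(s)}v^2s^{N-1}ds+\frac{(N-1)^2}{8}\int_0^\infty\frac{\rho(s)}{r^2(s)}v^2s^{N-1}ds,$$ where $\Delta v(s)=v''(s)+\frac{N-1}{s}v'(s)$ is the radial Euclidean Laplacian in $\mathbb{R}^N$. *)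

theory Defs
  imports "HOL-Analysis.Analysis"
begin

definition s_fun :: "nat \<Rightarrow> real \<Rightarrow> real" where
  "s_fun N r = ((real N - 2) * integral {r..} (\<lambda>\<sigma>. 1 / (sinh \<sigma>) ^ (N - 1)))
                 powr (- 1 / (real N - 2))"

definition r_fun :: "nat \<Rightarrow> real \<Rightarrow> real" where
  "r_fun N = inv_into {0<..} (s_fun N)"

definition rho :: "nat \<Rightarrow> real \<Rightarrow> real" where
  "rho N s = (sinh (r_fun N s) / s) ^ (2 * (N - 1))"

definition rad_lap :: "nat \<Rightarrow> (real \<Rightarrow> real) \<Rightarrow> real \<Rightarrow> real" where
  "rad_lap N v s = deriv (deriv v) s + (real N - 1) / s * deriv v s"

text \<open>C_c^infty(0,infty), functions extended by zero to all of R: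
  smooth (all iterated derivatives differentiable everywhere) with support
  contained in a compact interval [a,b] with 0 < a.\<close>
definition Cc_inf_pos :: "(real \<Rightarrow> real) \<Rightarrow> bool" where
  "Cc_inf_pos v \<longleftrightarrow> (\<forall>k x. ((deriv ^^ k) v) differentiable (at x)) \<and>
     (\<exists>a b. 0 < a \<and> a \<le> b \<and> (\<forall>x. x \<notin> {a..b} \<longrightarrow> v x = 0))"

end

theory Submission
  imports Defs
begin

text \<open>
  Substituting \<open>s = s(r)\<close> turns the inequality into a Rellich inequality for the hyperbolic
  radial Laplacian. With \<open>U = v \<circ> s\<close> and \<open>J = ds/dr = (s / sinh r)^(N-1)\<close> one has
  \<open>U'' + (N-1) coth r U' = J^2 (\<Delta>v)(s)\<close> and \<open>\<rho>(s(r)) = J^(-2)\<close>, so the two sides become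
  \<open>\<integral> (U'' + k coth r U')^2 sinh^k r dr\<close> and integrals of \<open>U^2 sinh^k r\<close> against
  \<open>1, r^(-4), r^(-2)\<close>, where \<open>k = N - 1 = 2m\<close>. The ground state substitution
  \<open>f = sinh^m r U\<close> gives \<open>U'' + k coth r U' = sinh^(-m) r (f'' - q f)\<close> with
  \<open>q = m^2 + (m^2 - m) / sinh^2 r\<close>. Expanding \<open>(f'' - q f)^2\<close> and completing squares against
  the weights \<open>1/(2r)\<close>, \<open>3/(2r^3)\<close> and \<open>2 cosh r / sinh^3 r\<close> (pointwise forms of one-dimensional
  Hardy inequalities) bounds it below by \<open>f^2 (m^4 + m^2/(2r^2) + 9/(16r^4))\<close> plus an exact
  derivative, which integrates to zero since \<open>v\<close> has compact support; the remainder dropped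
  on the way is nonnegative because \<open>m \<ge> 2\<close>, i.e. \<open>N \<ge> 5\<close>.
\<close>

lemma integral_le_up_to_exact_derivative:
  fixes L R g G :: "real \<Rightarrow> real"
  assumes "a \<le> b" "continuous_on {a..b} L" "continuous_on {a..b} R"
    and "\<And>x. x \<in> {a..b} \<Longrightarrow> (G has_real_derivative g x) (at x)"
    and "G a = 0" "G b = 0"
    and "\<And>x. x \<in> {a..b} \<Longrightarrow> R x + g x \<le> L x"
  shows "integral {a..b} R \<le> integral {a..b} L"
proof -
  have "(g has_integral G b - G a) {a..b}"
    using assms(1,4) by (intro fundamental_theorem_of_calculus)
      (auto simp: has_real_derivative_iff_has_vector_derivative[symmetric] has_field_derivative_at_within)
  then have "((\<lambda>x. R x + g x) has_integral integral {a..b} R) {a..b}"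
    using has_integral_add[OF integrable_integral[OF integrable_continuous_interval[OF assms(3)]]]
      assms(5,6) by fastforce
  then show ?thesis
    using has_integral_le[OF _ integrable_integral[OF integrable_continuous_interval[OF assms(2)]] assms(7)]
    by blast
qed

text \<open>The cross term \<open>2 \<Phi> g g' + \<Phi>' g^2\<close> is the derivative of \<open>\<Phi> g^2\<close>; the gap is
  \<open>(w g' - \<Phi> g)^2 / w\<close>.\<close>

lemma square_completion_le:
  fixes w \<Phi> \<Phi>' g g' a :: real
  assumes "0 < w" "a = - (\<Phi>' + \<Phi>^2 / w)"
  shows "a * g^2 + (2 * \<Phi> * g * g' + \<Phi>' * g^2) \<le> w * g'^2"
proof -
  have "w * g'^2 - (a * g^2 + (2 * \<Phi> * g * g' + \<Phi>' * g^2)) = (w * g' - \<Phi> * g)^2 / w"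
    using assms(1) unfolding assms(2) by (simp add: field_simps power2_eq_square)
  then show ?thesis
    using assms by (metis diff_ge_0_iff_ge divide_nonneg_pos zero_le_power2)
qed

lemma DERIV_mult_square:
  assumes "(\<Phi> has_real_derivative \<Phi>') (at x)" "(g has_real_derivative g') (at x)"
  shows "((\<lambda>x. \<Phi> x * g x^2) has_real_derivative 2 * \<Phi> x * g x * g' + \<Phi>' * g x^2) (at x)"
  by (auto intro!: derivative_eq_intros assms simp: algebra_simps)

lemma DERIV_cosh_div_sinh_cube:
  fixes x :: real
  assumes "x \<noteq> 0"
  shows "((\<lambda>x. 2 * cosh x / sinh x^3) has_real_derivative - (4 / sinh x^2 + 6 / sinh x^4)) (at x)"
proof -
  have "sinh x \<noteq> 0" using assms by simp
  moreover have "cosh x^2 = 1 + sinh x^2" by (simp add: cosh_square_eq)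
  ultimately show ?thesis
    by (auto intro!: derivative_eq_intros simp: field_simps eval_nat_numeral) algebra
qed

lemma DERIV_rellich_weights:
  fixes x c m :: real
  assumes "x \<noteq> 0"
  shows "((\<lambda>x. 1 / (2*x)) has_real_derivative - 1 / (2*x^2)) (at x)"
    and "((\<lambda>x. 3 / (2*x^3)) has_real_derivative - 9 / (2*x^4)) (at x)"
    and "((\<lambda>x. m^2 + c / sinh x^2) has_real_derivative - c * (2 * cosh x / sinh x^3)) (at x)"
    and "((\<lambda>x. - c * (2 * cosh x / sinh x^3)) has_real_derivative
        c * (4 / sinh x^2 + 6 / sinh x^4)) (at x)"
proof -
  show "((\<lambda>x. 1 / (2*x)) has_real_derivative - 1 / (2*x^2)) (at x)"
    and "((\<lambda>x. 3 / (2*x^3)) has_real_derivative - 9 / (2*x^4)) (at x)"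
    and "((\<lambda>x. m^2 + c / sinh x^2) has_real_derivative - c * (2 * cosh x / sinh x^3)) (at x)"
    using assms by (auto intro!: derivative_eq_intros simp: field_simps eval_nat_numeral)
  show "((\<lambda>x. - c * (2 * cosh x / sinh x^3)) has_real_derivative
      c * (4 / sinh x^2 + 6 / sinh x^4)) (at x)"
    using DERIV_cmult[OF DERIV_cosh_div_sinh_cube[OF assms], of "- c"] by (simp add: algebra_simps)
qed

lemma hardy_pointwise:
  fixes x f f' f'' :: real
  assumes "0 < x"
  shows "1 / (4*x^2) * f'^2 + (2 * (1 / (2*x)) * f' * f'' + - 1 / (2*x^2) * f'^2) \<le> f''^2"
    and "9 / (4*x^4) * f^2 + (2 * (3 / (2*x^3)) * f * f' + - 9 / (2*x^4) * f^2) \<le> 1 / x^2 * f'^2"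
    and "1 / (4*x^2) * f^2 + (2 * (1 / (2*x)) * f * f' + - 1 / (2*x^2) * f^2) \<le> f'^2"
    and "2 / sinh x^4 * f^2
      + (2 * (2 * cosh x / sinh x^3) * f * f' + - (4 / sinh x^2 + 6 / sinh x^4) * f^2)
      \<le> 1 / sinh x^2 * f'^2"
proof -
  have "1 / (4*x^2) = - (- 1 / (2*x^2) + (1 / (2*x))^2 / 1)"
    using assms by (simp add: field_simps power2_eq_square)
  from square_completion_le[OF zero_less_one this]
  show "1 / (4*x^2) * f'^2 + (2 * (1 / (2*x)) * f' * f'' + - 1 / (2*x^2) * f'^2) \<le> f''^2"
    and "1 / (4*x^2) * f^2 + (2 * (1 / (2*x)) * f * f' + - 1 / (2*x^2) * f^2) \<le> f'^2"
    by simp_all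
  show "9 / (4*x^4) * f^2 + (2 * (3 / (2*x^3)) * f * f' + - 9 / (2*x^4) * f^2) \<le> 1 / x^2 * f'^2"
    using assms by (intro square_completion_le) (simp_all add: field_simps eval_nat_numeral)
  have "sinh x > 0" "cosh x^2 = 1 + sinh x^2"
    using assms by (simp_all add: cosh_square_eq)
  then show "2 / sinh x^4 * f^2
      + (2 * (2 * cosh x / sinh x^3) * f * f' + - (4 / sinh x^2 + 6 / sinh x^4) * f^2)
      \<le> 1 / sinh x^2 * f'^2"
    by (intro square_completion_le) (simp_all add: field_simps eval_nat_numeral)
qed

text \<open>The bracketed terms are exact derivatives, of \<open>q' f^2 - 2 q f f'\<close> and of \<open>\<Phi> g^2\<close> for the
  weights of \<open>hardy_pointwise\<close>.\<close>

lemma rellich_pointwise: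
  fixes x m f f' f'' :: real
  assumes "0 < x" "2 \<le> m"
  defines "c \<equiv> m^2 - m"
  defines "q \<equiv> m^2 + c / sinh x^2"
  shows "f^2 * (m^4 + m^2 / (2*x^2) + 9 / (16*x^4))
      + (c * (4 / sinh x^2 + 6 / sinh x^4) * f^2 - 2 * q * f'^2 - 2 * q * f * f'')
      + (2 * (1 / (2*x)) * f' * f'' + - 1 / (2*x^2) * f'^2)
      + (2 * (3 / (2*x^3)) * f * f' + - 9 / (2*x^4) * f^2) / 4
      + 2 * m^2 * (2 * (1 / (2*x)) * f * f' + - 1 / (2*x^2) * f^2)
      + 2 * c * (2 * (2 * cosh x / sinh x^3) * f * f' + - (4 / sinh x^2 + 6 / sinh x^4) * f^2)
    \<le> (f'' - q * f)^2"
proof -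
  have sh: "sinh x > 0" using assms(1) by simp
  have "2 * m \<le> m^2"
    using assms(2) unfolding power2_eq_square by (intro mult_right_mono) auto
  then have c2: "2 \<le> c" and m4: "4 \<le> m^2"
    using assms(2) unfolding c_def by linarith+
  note hardy = hardy_pointwise(1)[OF assms(1), of f' f''] hardy_pointwise(2-4)[OF assms(1), of f f']
  let ?D1 = "2 * (1 / (2*x)) * f' * f'' + - 1 / (2*x^2) * f'^2"
  let ?D2 = "2 * (3 / (2*x^3)) * f * f' + - 9 / (2*x^4) * f^2"
  let ?D3 = "2 * (1 / (2*x)) * f * f' + - 1 / (2*x^2) * f^2"
  let ?D4 = "2 * (2 * cosh x / sinh x^3) * f * f' + - (4 / sinh x^2 + 6 / sinh x^4) * f^2"
  let ?T = "c * (4 / sinh x^2 + 6 / sinh x^4) * f^2 - 2 * q * f'^2 - 2 * q * f * f''"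
  let ?Q = "m^4 + 2 * m^2 * c / sinh x^2 + c^2 / sinh x^4 - c * (4 / sinh x^2 + 6 / sinh x^4)"
  have expand: "(f'' - q * f)^2 = f''^2 + 2 * m^2 * f'^2 + 2 * c * (1 / sinh x^2 * f'^2) + ?Q * f^2 + ?T"
    using sh unfolding q_def by (simp add: field_simps power2_eq_square power4_eq_xxxx)
  have regroup: "1 / 4 * (9 / (4*x^4) * f^2 + ?D2) + ?D1 + 2 * m^2 * (1 / (4*x^2) * f^2 + ?D3)
      + 2 * c * (2 / sinh x^4 * f^2 + ?D4) + ?Q * f^2 + ?T
      = f^2 * (m^4 + m^2 / (2*x^2) + 9 / (16*x^4)) + ?T + ?D1 + ?D2 / 4 + 2 * m^2 * ?D3 + 2 * c * ?D4
        + c * ((2 * m^2 - 4) * (f^2 / sinh x^2) + (c - 2) * (f^2 / sinh x^4))"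
    using sh assms(1) by (simp add: field_simps power2_eq_square power4_eq_xxxx)
  have "0 \<le> c * ((2 * m^2 - 4) * (f^2 / sinh x^2) + (c - 2) * (f^2 / sinh x^4))"
    using c2 m4 by (intro mult_nonneg_nonneg add_nonneg_nonneg) auto
  moreover have "2 * m^2 * (1 / (4*x^2) * f^2 + ?D3) \<le> 2 * m^2 * f'^2"
    using hardy(3) by (intro mult_left_mono) auto
  moreover have "2 * c * (2 / sinh x^4 * f^2 + ?D4) \<le> 2 * c * (1 / sinh x^2 * f'^2)"
    using hardy(4) c2 by (intro mult_left_mono) auto
  moreover have "1 / 4 * (9 / (4*x^4) * f^2 + ?D2) \<le> 1 / (4*x^2) * f'^2"
    using hardy(2) by simp
  ultimately show ?thesis
    using hardy(1) expand regroup by linarith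
qed

lemma DERIV_weighted_parts:
  assumes "(Q has_real_derivative Q1 x) (at x)" "(Q1 has_real_derivative Q2) (at x)"
    and "(f has_real_derivative f1 x) (at x)" "(f1 has_real_derivative f2) (at x)"
  shows "((\<lambda>x. Q1 x * f x^2 - 2 * Q x * f x * f1 x) has_real_derivative
      Q2 * f x^2 - 2 * Q x * f1 x^2 - 2 * Q x * f x * f2) (at x)"
  by (auto intro!: derivative_eq_intros assms simp: algebra_simps power2_eq_square)

lemma rellich_conjugated:
  fixes m a b :: real and f f' f'' :: "real \<Rightarrow> real"
  assumes m: "2 \<le> m" and ab: "0 < a" "a \<le> b"
    and df: "\<And>x. x \<in> {a..b} \<Longrightarrow> (f has_real_derivative f' x) (at x)"
    and df': "\<And>x. x \<in> {a..b} \<Longrightarrow> (f' has_real_derivative f'' x) (at x)"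
    and cont: "continuous_on {a..b} f''"
    and bdry: "f a = 0" "f b = 0" "f' a = 0" "f' b = 0"
  shows "integral {a..b} (\<lambda>x. f x^2 * (m^4 + m^2 / (2*x^2) + 9 / (16*x^4)))
      \<le> integral {a..b} (\<lambda>x. (f'' x - (m^2 + (m^2 - m) / sinh x^2) * f x)^2)"
proof -
  define c where "c = m^2 - m"
  define q where "q x = m^2 + c / sinh x^2" for x
  define G where "G x = (- c * (2 * cosh x / sinh x^3) * f x^2 - 2 * q x * f x * f' x)
      + 1 / (2*x) * f' x^2 + 3 / (2*x^3) * f x^2 / 4 + 2 * m^2 * (1 / (2*x) * f x^2)
      + 2 * c * (2 * cosh x / sinh x^3 * f x^2)" for x
  define g where "g x = (c * (4 / sinh x^2 + 6 / sinh x^4) * f x^2 - 2 * q x * f' x^2 - 2 * q x * f x * f'' x)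
      + (2 * (1 / (2*x)) * f' x * f'' x + - 1 / (2*x^2) * f' x^2)
      + (2 * (3 / (2*x^3)) * f x * f' x + - 9 / (2*x^4) * f x^2) / 4
      + 2 * m^2 * (2 * (1 / (2*x)) * f x * f' x + - 1 / (2*x^2) * f x^2)
      + 2 * c * (2 * (2 * cosh x / sinh x^3) * f x * f' x + - (4 / sinh x^2 + 6 / sinh x^4) * f x^2)"
    for x
  have dG: "(G has_real_derivative g x) (at x)" if x: "x \<in> {a..b}" for x
  proof -
    have "x \<noteq> 0" using x ab by auto
    note weights = DERIV_rellich_weights[OF this]
    show ?thesis
      unfolding G_def[abs_def] g_def q_def[abs_def]
      by (intro DERIV_add DERIV_cmult DERIV_cdivide DERIV_mult_square DERIV_weighted_parts
          DERIV_cosh_div_sinh_cube weights df df' x) (use \<open>x \<noteq> 0\<close> in auto)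
  qed
  have "G a = 0" "G b = 0"
    unfolding G_def using bdry by simp_all
  moreover have "continuous_on {a..b} f" "continuous_on {a..b} f'"
    using df df' DERIV_isCont by (metis continuous_at_imp_continuous_on)+
  then have "continuous_on {a..b} (\<lambda>x. f x^2 * (m^4 + m^2 / (2*x^2) + 9 / (16*x^4)))"
    and "continuous_on {a..b} (\<lambda>x. (f'' x - (m^2 + (m^2 - m) / sinh x^2) * f x)^2)"
    using ab by (auto intro!: continuous_intros cont)
  moreover have "f x^2 * (m^4 + m^2 / (2*x^2) + 9 / (16*x^4)) + g x
      \<le> (f'' x - (m^2 + (m^2 - m) / sinh x^2) * f x)^2" if "x \<in> {a..b}" for x
    using rellich_pointwise[of x m "f x" "f' x" "f'' x"] that ab m
    unfolding g_def q_def c_def by auto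
  ultimately show ?thesis
    using ab dG by (intro integral_le_up_to_exact_derivative[where G = G and g = g]) auto
qed

lemma DERIV_sinh_powr:
  fixes m x :: real
  assumes "0 < x"
  shows "((\<lambda>x. sinh x powr m) has_real_derivative m * cosh x / sinh x * sinh x powr m) (at x)"
proof -
  have "sinh x > 0" using assms by simp
  then show ?thesis
    by (auto intro!: derivative_eq_intros simp: powr_diff)
qed

lemma DERIV_coth_sinh_powr:
  fixes m x :: real
  assumes "0 < x"
  shows "((\<lambda>x. m * cosh x / sinh x * sinh x powr m) has_real_derivative
      (m^2 + (m^2 - m) / sinh x^2) * sinh x powr m) (at x)"
proof -
  have sh: "sinh x > 0" using assms by simp
  have ch: "cosh x^2 = 1 + sinh x^2" by (simp add: cosh_square_eq)
  have "m * cosh x / sinh x * (m * cosh x / sinh x) = m^2 * cosh x^2 / sinh x^2"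
    by (simp add: power2_eq_square)
  also have "\<dots> = m^2 + m^2 / sinh x^2"
    using sh by (simp add: ch field_simps)
  finally have coth_sq: "m * cosh x / sinh x * (m * cosh x / sinh x) = m^2 + m^2 / sinh x^2" .
  have "((\<lambda>x. m * cosh x / sinh x) has_real_derivative - m / sinh x^2) (at x)"
    using sh ch by (auto intro!: derivative_eq_intros simp: field_simps power2_eq_square)
  from DERIV_mult[OF this DERIV_sinh_powr[OF assms, of m]]
  have "((\<lambda>x. m * cosh x / sinh x * sinh x powr m) has_real_derivative
      (m * cosh x / sinh x * (m * cosh x / sinh x) - m / sinh x^2) * sinh x powr m) (at x)"
    by (simp add: algebra_simps)
  then show ?thesis
    unfolding coth_sq by (simp add: diff_divide_distrib add_diff_eq)
qed

lemma DERIV_sinh_powr_conjugate: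
  fixes m x :: real and U U' U'' :: "real \<Rightarrow> real"
  assumes x: "0 < x"
    and dU: "(U has_real_derivative U' x) (at x)" and dU': "(U' has_real_derivative U'' x) (at x)"
  shows "((\<lambda>x. sinh x powr m * U x) has_real_derivative
      m * cosh x / sinh x * sinh x powr m * U x + sinh x powr m * U' x) (at x)"
    and "((\<lambda>x. m * cosh x / sinh x * sinh x powr m * U x + sinh x powr m * U' x) has_real_derivative
      (m^2 + (m^2 - m) / sinh x^2) * (sinh x powr m * U x)
        + sinh x powr m * (U'' x + 2 * m * (cosh x / sinh x) * U' x)) (at x)"
  using DERIV_mult[OF DERIV_sinh_powr[OF x, of m] dU]
    DERIV_add[OF DERIV_mult[OF DERIV_coth_sinh_powr[OF x, of m] dU] DERIV_mult[OF DERIV_sinh_powr[OF x, of m] dU']]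
  by (simp_all add: algebra_simps)

lemma rellich_hyperbolic_weighted:
  fixes k :: nat and a b :: real and U U' U'' :: "real \<Rightarrow> real"
  assumes k: "4 \<le> k" and ab: "0 < a" "a \<le> b"
    and dU: "\<And>x. x \<in> {a..b} \<Longrightarrow> (U has_real_derivative U' x) (at x)"
    and dU': "\<And>x. x \<in> {a..b} \<Longrightarrow> (U' has_real_derivative U'' x) (at x)"
    and cont: "continuous_on {a..b} U''"
    and bdry: "U a = 0" "U b = 0" "U' a = 0" "U' b = 0"
  shows "integral {a..b} (\<lambda>r. U r^2 * sinh r^k
        * ((real k / 2)^4 + (real k / 2)^2 / (2*r^2) + 9 / (16*r^4)))
    \<le> integral {a..b} (\<lambda>r. (U'' r + real k * (cosh r / sinh r) * U' r)^2 * sinh r^k)"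
proof -
  define m where "m = real k / 2"
  define P where "P x = sinh x powr m" for x
  have pos: "0 < x" if "x \<in> {a..b}" for x
    using that ab by auto
  have P_sq: "P x^2 = sinh x^k" if "0 < x" for x
    using that unfolding P_def m_def
    by (simp add: powr_realpow[symmetric] powr_add[symmetric] power2_eq_square)
  have "integral {a..b} (\<lambda>x. (P x * U x)^2 * (m^4 + m^2 / (2*x^2) + 9 / (16*x^4)))
      \<le> integral {a..b} (\<lambda>x. (((m^2 + (m^2 - m) / sinh x^2) * (P x * U x)
          + P x * (U'' x + 2 * m * (cosh x / sinh x) * U' x))
        - (m^2 + (m^2 - m) / sinh x^2) * (P x * U x))^2)"
  proof (rule rellich_conjugated[where f' = "\<lambda>x. m * cosh x / sinh x * P x * U x + P x * U' x"])
    show "2 \<le> m"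
      using k unfolding m_def by simp
    show "((\<lambda>x. P x * U x) has_real_derivative m * cosh x / sinh x * P x * U x + P x * U' x) (at x)"
      and "((\<lambda>x. m * cosh x / sinh x * P x * U x + P x * U' x) has_real_derivative
        (m^2 + (m^2 - m) / sinh x^2) * (P x * U x)
          + P x * (U'' x + 2 * m * (cosh x / sinh x) * U' x)) (at x)"
      if "x \<in> {a..b}" for x
      unfolding P_def
      using DERIV_sinh_powr_conjugate[where U = U and U' = U' and U'' = U'' and m = m,
          OF pos[OF that] dU[OF that] dU'[OF that]] .
    have "continuous_on {a..b} U" "continuous_on {a..b} U'"
      using dU dU' DERIV_isCont by (metis continuous_at_imp_continuous_on)+
    then show "continuous_on {a..b} (\<lambda>x. (m^2 + (m^2 - m) / sinh x^2) * (P x * U x)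
        + P x * (U'' x + 2 * m * (cosh x / sinh x) * U' x))"
      unfolding P_def using pos ab by (auto intro!: continuous_intros cont)
  qed (use ab bdry in auto)
  moreover have "(P x * U x)^2 * (m^4 + m^2 / (2*x^2) + 9 / (16*x^4))
      = U x^2 * sinh x^k * ((real k / 2)^4 + (real k / 2)^2 / (2*x^2) + 9 / (16*x^4))"
    and "(((m^2 + (m^2 - m) / sinh x^2) * (P x * U x) + P x * (U'' x + 2 * m * (cosh x / sinh x) * U' x))
        - (m^2 + (m^2 - m) / sinh x^2) * (P x * U x))^2
      = (U'' x + real k * (cosh x / sinh x) * U' x)^2 * sinh x^k"
    if "x \<in> {a..b}" for x
    using P_sq[OF pos[OF that]] by (simp_all add: power_mult_distrib m_def)
  ultimately show ?thesis
    by (metis (no_types, lifting) integral_cong)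
qed

lemma rellich_hyperbolic:
  fixes k :: nat and a b :: real and U U' U'' :: "real \<Rightarrow> real"
  assumes k: "4 \<le> k" and ab: "0 < a" "a \<le> b"
    and dU: "\<And>x. x \<in> {a..b} \<Longrightarrow> (U has_real_derivative U' x) (at x)"
    and dU': "\<And>x. x \<in> {a..b} \<Longrightarrow> (U' has_real_derivative U'' x) (at x)"
    and cont: "continuous_on {a..b} U''"
    and bdry: "U a = 0" "U b = 0" "U' a = 0" "U' b = 0"
  shows "real k^4 / 16 * integral {a..b} (\<lambda>r. U r^2 * sinh r^k)
      + 9 / 16 * integral {a..b} (\<lambda>r. U r^2 * sinh r^k / r^4)
      + real k^2 / 8 * integral {a..b} (\<lambda>r. U r^2 * sinh r^k / r^2)
    \<le> integral {a..b} (\<lambda>r. (U'' r + real k * (cosh r / sinh r) * U' r)^2 * sinh r^k)"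
proof -
  have "continuous_on {a..b} U"
    using dU DERIV_isCont by (metis continuous_at_imp_continuous_on)
  then have "(\<lambda>r. U r^2 * sinh r^k) integrable_on {a..b}"
    and "(\<lambda>r. U r^2 * sinh r^k / r^4) integrable_on {a..b}"
    and "(\<lambda>r. U r^2 * sinh r^k / r^2) integrable_on {a..b}"
    using ab by (auto intro!: integrable_continuous_interval continuous_intros)
  then have "real k^4 / 16 * integral {a..b} (\<lambda>r. U r^2 * sinh r^k)
      + 9 / 16 * integral {a..b} (\<lambda>r. U r^2 * sinh r^k / r^4)
      + real k^2 / 8 * integral {a..b} (\<lambda>r. U r^2 * sinh r^k / r^2)
      = integral {a..b} (\<lambda>r. real k^4 / 16 * (U r^2 * sinh r^k)
          + 9 / 16 * (U r^2 * sinh r^k / r^4) + real k^2 / 8 * (U r^2 * sinh r^k / r^2))"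
    by (intro integral_unique[symmetric] has_integral_add has_integral_mult_right integrable_integral)
  also have "\<dots> = integral {a..b} (\<lambda>r. U r^2 * sinh r^k
      * ((real k / 2)^4 + (real k / 2)^2 / (2*r^2) + 9 / (16*r^4)))"
    by (intro integral_cong) (simp add: field_simps)
  also have "\<dots> \<le> integral {a..b} (\<lambda>r. (U'' r + real k * (cosh r / sinh r) * U' r)^2 * sinh r^k)"
    by (rule rellich_hyperbolic_weighted[OF assms])
  finally show ?thesis .
qed

definition sinh_tail :: "nat \<Rightarrow> real \<Rightarrow> real" where
  "sinh_tail k r = integral {r..} (\<lambda>\<sigma>. 1 / sinh \<sigma> ^ k)"

lemma s_fun_sinh_tail: "s_fun N r = ((real N - 2) * sinh_tail (N - 1) r) powr (- 1 / (real N - 2))"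
  unfolding s_fun_def sinh_tail_def ..

lemma inverse_sinh_power_le_exp:
  fixes r \<sigma> :: real
  assumes "0 < r" "r \<le> \<sigma>"
  shows "1 / sinh \<sigma> ^ k \<le> (2 / (1 - exp (-2*r)))^k * exp (- real k * \<sigma>)"
proof -
  have "exp (-2*\<sigma>) \<le> exp (-2*r)" using assms by simp
  then have "exp \<sigma> * (1 - exp (-2*r)) \<le> exp \<sigma> * (1 - exp (-2*\<sigma>))"
    by (intro mult_left_mono) auto
  also have "\<dots> = 2 * sinh \<sigma>"
    by (simp add: sinh_def algebra_simps flip: exp_add)
  finally have "exp \<sigma> * (1 - exp (-2*r)) / 2 \<le> sinh \<sigma>" by simp
  moreover have "0 < exp \<sigma> * (1 - exp (-2*r)) / 2" using assms by simp
  ultimately have "1 / sinh \<sigma> \<le> 1 / (exp \<sigma> * (1 - exp (-2*r)) / 2)"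
    using assms by (intro divide_left_mono) auto
  also have "\<dots> = 2 / (1 - exp (-2*r)) * exp (-\<sigma>)"
    by (simp add: exp_minus field_simps)
  finally have "1 / sinh \<sigma> \<le> 2 / (1 - exp (-2*r)) * exp (-\<sigma>)" .
  then have "(1 / sinh \<sigma>)^k \<le> (2 / (1 - exp (-2*r)) * exp (-\<sigma>))^k"
    using assms by (intro power_mono) auto
  also have "\<dots> = (2 / (1 - exp (-2*r)))^k * exp (- real k * \<sigma>)"
    using exp_of_nat_mult[of k "-\<sigma>"] by (simp only: power_mult_distrib) simp
  finally show ?thesis
    by (simp add: power_one_over)
qed

lemma inverse_sinh_power_integrable:
  fixes r :: real
  assumes "0 < r" "0 < k"
  shows "(\<lambda>\<sigma>. 1 / sinh \<sigma> ^ k) integrable_on {r..}"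
proof (rule integrable_on_all_intervals_integrable_bound)
  fix a b :: real
  have "(\<lambda>\<sigma>. 1 / sinh \<sigma> ^ k) integrable_on {max r a..b}"
    using assms by (intro integrable_continuous_interval continuous_intros) auto
  then show "(\<lambda>x. if x \<in> {r..} then 1 / sinh x ^ k else 0) integrable_on cbox a b"
    unfolding integrable_restrict_Int by (simp add: Int_atLeastAtMost Int_commute)
next
  show "norm (1 / sinh x ^ k) \<le> (2 / (1 - exp (-2*r)))^k * exp (- real k * x)"
    if "x \<in> {r..}" for x
    using inverse_sinh_power_le_exp[of r x k] that assms by auto
  show "(\<lambda>x. (2 / (1 - exp (-2*r)))^k * exp (- real k * x)) integrable_on {r..}"
    using integrable_on_exp_minus_to_infinity[of "real k" r] assms by simp
qed

lemma sinh_tail_split: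
  fixes r t :: real
  assumes "0 < r" "r \<le> t" "0 < k"
  shows "sinh_tail k r = integral {r..t} (\<lambda>\<sigma>. 1 / sinh \<sigma> ^ k) + sinh_tail k t"
proof -
  have "((\<lambda>\<sigma>. 1 / sinh \<sigma> ^ k) has_integral integral {r..t} (\<lambda>\<sigma>. 1 / sinh \<sigma> ^ k)) {r..t}"
    using assms by (intro integrable_integral integrable_continuous_interval continuous_intros) auto
  moreover have "((\<lambda>\<sigma>. 1 / sinh \<sigma> ^ k) has_integral sinh_tail k t) {t..}"
    unfolding sinh_tail_def using assms by (intro integrable_integral inverse_sinh_power_integrable) auto
  moreover have "{r..t} \<union> {t..} = {r..}" "negligible ({r..t} \<inter> {t..})"
    using assms by (auto simp: Int_atLeastAtMost)
  ultimately show ?thesis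
    unfolding sinh_tail_def by (metis has_integral_Un integral_unique)
qed

lemma has_real_derivative_sinh_tail:
  fixes r :: real
  assumes "0 < r" "0 < k"
  shows "(sinh_tail k has_real_derivative - (1 / sinh r ^ k)) (at r)"
proof -
  have "continuous_on {r/2..2*r} (\<lambda>\<sigma>. 1 / sinh \<sigma> ^ k)"
    using assms by (intro continuous_intros) auto
  then have "((\<lambda>x. integral {x..2*r} (\<lambda>\<sigma>. 1 / sinh \<sigma> ^ k)) has_real_derivative
      - (1 / sinh r ^ k)) (at r within {r/2..2*r})"
    using assms by (intro integral_has_real_derivative') auto
  moreover have "at r within {r/2..2*r} = at r"
    using assms by (intro at_within_Icc_at) auto
  ultimately have "((\<lambda>x. integral {x..2*r} (\<lambda>\<sigma>. 1 / sinh \<sigma> ^ k) + sinh_tail k (2*r))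
      has_real_derivative - (1 / sinh r ^ k)) (at r)"
    by (auto intro!: derivative_eq_intros)
  then show ?thesis
  proof (rule has_field_derivative_transform_within_open)
    show "open {r/2<..<2*r}" "r \<in> {r/2<..<2*r}"
      using assms by auto
    fix x assume "x \<in> {r/2<..<2*r}"
    then show "integral {x..2*r} (\<lambda>\<sigma>. 1 / sinh \<sigma> ^ k) + sinh_tail k (2*r) = sinh_tail k x"
      using sinh_tail_split[of x "2*r" k] assms by simp
  qed
qed

lemma sinh_tail_pos:
  fixes r :: real
  assumes "0 < r" "0 < k"
  shows "0 < sinh_tail k r"
proof -
  have "integral {r..r+1} (\<lambda>_. 1 / sinh (r+1) ^ k) \<le> integral {r..r+1} (\<lambda>\<sigma>. 1 / sinh \<sigma> ^ k)"
  proof (rule integral_le)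
    show "(\<lambda>\<sigma>. 1 / sinh \<sigma> ^ k) integrable_on {r..r+1}"
      using assms by (intro integrable_continuous_interval continuous_intros) auto
    show "1 / sinh (r+1) ^ k \<le> 1 / sinh x ^ k" if "x \<in> {r..r+1}" for x
      using that assms by (intro divide_left_mono power_mono mult_pos_pos) auto
  qed (rule integrable_const_ivl)
  then have "1 / sinh (r+1) ^ k \<le> integral {r..r+1} (\<lambda>\<sigma>. 1 / sinh \<sigma> ^ k)"
    by simp
  moreover have "0 \<le> sinh_tail k (r+1)"
    unfolding sinh_tail_def using assms by (intro integral_nonneg inverse_sinh_power_integrable) auto
  moreover have "0 < 1 / sinh (r+1) ^ k"
    using assms by simp
  moreover have "sinh_tail k r = integral {r..r+1} (\<lambda>\<sigma>. 1 / sinh \<sigma> ^ k) + sinh_tail k (r+1)"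
    using sinh_tail_split[of r "r+1" k] assms by simp
  ultimately show ?thesis
    by linarith
qed

lemma sinh_le_two_mul:
  fixes \<sigma> :: real
  assumes "0 \<le> \<sigma>" "\<sigma> \<le> 1/2"
  shows "sinh \<sigma> \<le> 2 * \<sigma>"
proof -
  have e1: "1 - \<sigma> \<le> exp (-\<sigma>)" using exp_ge_add_one_self[of "-\<sigma>"] by simp
  have "1 \<le> (1 + 2*\<sigma>) * (1 - \<sigma>)"
    using assms mult_left_mono[of "2*\<sigma>" 1 \<sigma>] by (simp add: algebra_simps)
  then have "1 / (1 - \<sigma>) \<le> 1 + 2*\<sigma>"
    using assms by (simp add: field_simps)
  moreover have "exp \<sigma> \<le> 1 / (1 - \<sigma>)"
    using e1 assms by (simp add: exp_minus field_simps)
  ultimately have "exp \<sigma> - exp (-\<sigma>) \<le> 4 * \<sigma>"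
    using e1 assms by linarith
  then show ?thesis
    unfolding sinh_field_def by simp
qed

lemma sinh_tail_ge:
  fixes r :: real
  assumes "0 < r" "r \<le> 1/4" "2 \<le> k"
  shows "1 / (4^k * r) \<le> sinh_tail k r"
proof -
  have "integral {r..2*r} (\<lambda>_. 1 / (4*r)^k) \<le> integral {r..2*r} (\<lambda>\<sigma>. 1 / sinh \<sigma> ^ k)"
  proof (rule integral_le)
    show "(\<lambda>\<sigma>. 1 / sinh \<sigma> ^ k) integrable_on {r..2*r}"
      using assms by (intro integrable_continuous_interval continuous_intros) auto
    show "1 / (4*r)^k \<le> 1 / sinh x ^ k" if "x \<in> {r..2*r}" for x
      using that assms sinh_le_two_mul[of x] by (intro divide_left_mono power_mono mult_pos_pos) auto
  qed (rule integrable_const_ivl)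
  then have "r / (4*r)^k \<le> integral {r..2*r} (\<lambda>\<sigma>. 1 / sinh \<sigma> ^ k)"
    using assms by simp
  moreover have "1 / (4^k * r) \<le> r / (4*r)^k"
  proof -
    have "r^k \<le> r^2"
      using assms by (intro power_decreasing) auto
    then show ?thesis
      using assms by (simp add: power_mult_distrib field_simps power2_eq_square)
  qed
  moreover have "0 \<le> sinh_tail k (2*r)"
    unfolding sinh_tail_def using assms by (intro integral_nonneg inverse_sinh_power_integrable) auto
  moreover have "sinh_tail k r = integral {r..2*r} (\<lambda>\<sigma>. 1 / sinh \<sigma> ^ k) + sinh_tail k (2*r)"
    using sinh_tail_split[of r "2*r" k] assms by simp
  ultimately show ?thesis
    by linarith
qed

lemma sinh_tail_le:
  fixes r :: real
  assumes "1 \<le> r" "0 < k"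
  shows "sinh_tail k r \<le> 4^k * exp (-r)"
proof -
  have "3 \<le> exp (2*r)"
    using exp_ge_add_one_self[of "2*r"] assms by linarith
  then have "2 \<le> 4 * (1 - exp (-2*r))"
    by (simp add: exp_minus field_simps)
  then have C: "2 / (1 - exp (-2*r)) \<le> 4"
    using assms by (simp add: field_simps)
  have "sinh_tail k r \<le> 4^k * (exp (- real k * r) / real k)"
    unfolding sinh_tail_def
  proof (rule has_integral_le[OF integrable_integral[OF inverse_sinh_power_integrable]])
    show "((\<lambda>x. 4^k * exp (- real k * x)) has_integral 4^k * (exp (- real k * r) / real k)) {r..}"
      using has_integral_exp_minus_to_infinity[of "real k" r] assms
      by (intro has_integral_mult_right) auto
    show "1 / sinh x ^ k \<le> 4^k * exp (- real k * x)" if "x \<in> {r..}" for x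
    proof -
      have "1 / sinh x ^ k \<le> (2 / (1 - exp (-2*r)))^k * exp (- real k * x)"
        using inverse_sinh_power_le_exp[of r x k] that assms by auto
      also have "\<dots> \<le> 4^k * exp (- real k * x)"
        using C assms by (intro mult_right_mono power_mono) auto
      finally show ?thesis .
    qed
  qed (use assms in auto)
  also have "\<dots> \<le> 4^k * exp (-r)"
  proof -
    have "exp (- real k * r) \<le> exp (-r)"
      using assms by (simp add: mult_right_mono)
    moreover have "exp (- real k * r) / real k \<le> exp (- real k * r)"
      using assms by (simp add: divide_le_eq mult_le_cancel_left1)
    ultimately show ?thesis
      by (intro mult_left_mono) (auto simp del: exp_le_cancel_iff)
  qed
  finally show ?thesis .
qed

lemma s_fun_pos:
  assumes "3 \<le> N" "0 < r"
  shows "0 < s_fun N r"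
  unfolding s_fun_sinh_tail using sinh_tail_pos[of r "N - 1"] assms by simp

lemma has_real_derivative_s_fun:
  assumes "3 \<le> N" "0 < r"
  shows "(s_fun N has_real_derivative (s_fun N r / sinh r)^(N - 1)) (at r)"
proof -
  define e where "e = - 1 / (real N - 2)"
  define X where "X r = (real N - 2) * sinh_tail (N - 1) r" for r
  have X_pos: "0 < X r"
    unfolding X_def using sinh_tail_pos[of r "N - 1"] assms by simp
  have "((\<lambda>r. X r powr e) has_real_derivative
      e * X r powr (e - 1) * ((real N - 2) * - (1 / sinh r ^ (N - 1)))) (at r)"
    unfolding X_def[abs_def] using assms X_pos[unfolded X_def]
    by (auto intro!: derivative_eq_intros has_real_derivative_sinh_tail)
  moreover have "e * X r powr (e - 1) * ((real N - 2) * - (1 / sinh r ^ (N - 1)))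
      = (X r powr e / sinh r)^(N - 1)"
  proof -
    have exp_eq: "e - 1 = real (N - 1) * e" and e_mult: "e * (real N - 2) = - 1"
      using assms unfolding e_def by (simp_all add: of_nat_diff field_simps)
    have "e * X r powr (e - 1) * ((real N - 2) * - (1 / sinh r ^ (N - 1)))
        = - (e * (real N - 2)) * (X r powr (e - 1) / sinh r ^ (N - 1))"
      by (simp add: divide_inverse ac_simps)
    also have "\<dots> = X r powr (real (N - 1) * e) / sinh r ^ (N - 1)"
      unfolding e_mult exp_eq by simp
    also have "\<dots> = (X r powr e / sinh r)^(N - 1)"
      using X_pos by (simp add: power_divide powr_power)
    finally show ?thesis .
  qed
  moreover have "s_fun N = (\<lambda>r. X r powr e)"
    unfolding s_fun_sinh_tail[abs_def] X_def e_def ..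
  ultimately show ?thesis
    by simp
qed

lemma s_fun_strict_mono:
  assumes "3 \<le> N"
  shows "strict_mono_on {0<..} (s_fun N)"
proof (rule strict_mono_onI)
  fix x y :: real assume "x \<in> {0<..}" "y \<in> {0<..}" "x < y"
  show "s_fun N x < s_fun N y"
  proof (rule DERIV_pos_imp_increasing[OF \<open>x < y\<close>])
    fix t assume "x \<le> t" "t \<le> y"
    then have "0 < t" using \<open>x \<in> {0<..}\<close> by simp
    then show "\<exists>D. (s_fun N has_real_derivative D) (at t) \<and> 0 < D"
      using has_real_derivative_s_fun[OF assms] s_fun_pos[OF assms] by force
  qed
qed

lemma r_fun_s_fun:
  assumes "3 \<le> N" "0 < r"
  shows "r_fun N (s_fun N r) = r"
  unfolding r_fun_def
  using strict_mono_on_imp_inj_on[OF s_fun_strict_mono[OF assms(1)]] assms(2)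
  by (simp add: inv_into_f_f)

lemma s_fun_less:
  assumes "3 \<le> N" "0 < a"
  obtains r where "0 < r" "s_fun N r < a"
proof -
  define d where "d = real N - 2"
  define A where "A = a powr (- d)"
  define D where "D = d / (4^(N - 1) * A)"
  define r where "r = min (1/4) (D / 2)"
  have d: "0 < d" and A: "0 < A"
    using assms unfolding d_def A_def by auto
  then have "0 < D"
    unfolding D_def by simp
  then have r: "0 < r" "r \<le> 1/4" "r < d / (4^(N - 1) * A)"
    unfolding r_def D_def[symmetric] by auto
  then have "A < d * (1 / (4^(N - 1) * r))"
    using A by (simp add: field_simps)
  also have "\<dots> \<le> d * sinh_tail (N - 1) r"
    using sinh_tail_ge[of r "N - 1"] r d assms(1) by (intro mult_left_mono) auto
  finally have "(d * sinh_tail (N - 1) r) powr (- 1 / d) < A powr (- 1 / d)"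
    using A d by (intro powr_less_mono2_neg) auto
  also have "A powr (- 1 / d) = a"
    unfolding A_def powr_powr using d assms(2) by simp
  finally show ?thesis
    using that r(1) unfolding s_fun_sinh_tail d_def by blast
qed

lemma s_fun_greater:
  assumes "3 \<le> N" "0 < b"
  obtains r where "1 \<le> r" "b < s_fun N r"
proof -
  define d where "d = real N - 2"
  define B where "B = b powr (- d)"
  define r where "r = max 1 (1 - ln (B / (d * 4^(N - 1))))"
  have d: "0 < d" and B: "0 < B"
    using assms unfolding d_def B_def by auto
  have r: "1 \<le> r" "- r < ln (B / (d * 4^(N - 1)))"
    unfolding r_def by auto
  have "d * sinh_tail (N - 1) r \<le> d * (4^(N - 1) * exp (- r))"
    using sinh_tail_le[of r "N - 1"] r d assms(1) by (intro mult_left_mono) auto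
  also have "\<dots> < B"
  proof -
    have "exp (- r) < B / (d * 4^(N - 1))"
      using exp_less_mono[OF r(2)] d B by simp
    then show ?thesis
      using d by (simp add: field_simps)
  qed
  finally have "B powr (- 1 / d) < (d * sinh_tail (N - 1) r) powr (- 1 / d)"
    using sinh_tail_pos[of r "N - 1"] r d assms(1) by (intro powr_less_mono2_neg) auto
  also have "B powr (- 1 / d) = b"
    unfolding B_def powr_powr using d assms(2) by simp
  finally show ?thesis
    using that r(1) unfolding s_fun_sinh_tail d_def by blast
qed

lemma deriv_eq_0_on_open:
  assumes "open S" "x \<in> S" "\<And>y. y \<in> S \<Longrightarrow> f y = 0"
  shows "deriv f x = 0"
proof -
  have "eventually (\<lambda>y. f y = 0) (nhds x)"
    using assms eventually_nhds_in_open[OF assms(1,2)] by (auto elim: eventually_mono)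
  then show ?thesis
    using deriv_cong_ev[of f "\<lambda>_. 0" x x] by simp
qed

lemma Cc_inf_posE:
  assumes "Cc_inf_pos v"
  obtains a b where "0 < a" "a \<le> b"
    and "\<And>x. (v has_real_derivative deriv v x) (at x)"
    and "\<And>x. (deriv v has_real_derivative deriv (deriv v) x) (at x)"
    and "continuous_on UNIV (deriv (deriv v))"
    and "\<And>x. x \<notin> {a..b} \<Longrightarrow> v x = 0"
    and "\<And>x. x \<notin> {a..b} \<Longrightarrow> deriv v x = 0"
    and "\<And>x. x \<notin> {a..b} \<Longrightarrow> deriv (deriv v) x = 0"
proof -
  from assms obtain a b where ab: "0 < a" "a \<le> b" "\<And>x. x \<notin> {a..b} \<Longrightarrow> v x = 0"
    and smooth: "\<And>k x. ((deriv ^^ k) v) differentiable (at x)"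
    unfolding Cc_inf_pos_def by blast
  have dv: "(v has_real_derivative deriv v x) (at x)" for x
    using smooth[of 0 x] by (simp add: DERIV_deriv_iff_real_differentiable)
  have ddv: "(deriv v has_real_derivative deriv (deriv v) x) (at x)" for x
    using smooth[of 1 x] by (simp add: DERIV_deriv_iff_real_differentiable)
  have "continuous_on UNIV (deriv (deriv v))"
    using smooth[of 2] by (simp add: numeral_2_eq_2 differentiable_imp_continuous_on differentiable_on_def)
  moreover have dv0: "deriv v x = 0" if "x \<notin> {a..b}" for x
    using that ab(3) by (intro deriv_eq_0_on_open[of "- {a..b}"]) auto
  moreover have "deriv (deriv v) x = 0" if "x \<notin> {a..b}" for x
    using that dv0 by (intro deriv_eq_0_on_open[of "- {a..b}" _ "deriv v"]) auto
  ultimately show ?thesis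
    using that ab dv ddv by blast
qed

lemma s_fun_mono:
  assumes "3 \<le> N" "0 < x" "x \<le> y"
  shows "s_fun N x \<le> s_fun N y"
  using strict_mono_onD[OF s_fun_strict_mono[OF assms(1)], of x y] assms
  by (cases "x = y") auto

lemma continuous_on_s_fun:
  assumes "3 \<le> N" "0 < a"
  shows "continuous_on {a..b} (s_fun N)"
  by (intro continuous_at_imp_continuous_on ballI DERIV_isCont[OF has_real_derivative_s_fun[OF assms(1)]])
    (use assms(2) in auto)

lemma s_fun_image:
  assumes "3 \<le> N" "0 < a" "a \<le> b"
  shows "s_fun N ` {a..b} = {s_fun N a..s_fun N b}"
proof
  show "s_fun N ` {a..b} \<subseteq> {s_fun N a..s_fun N b}"
    using s_fun_mono[OF assms(1)] assms(2) by auto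
  show "{s_fun N a..s_fun N b} \<subseteq> s_fun N ` {a..b}"
  proof
    fix y assume "y \<in> {s_fun N a..s_fun N b}"
    then obtain x where "a \<le> x" "x \<le> b" "s_fun N x = y"
      using IVT'[of "s_fun N" a y b] continuous_on_s_fun[OF assms(1,2)] assms(3) by auto
    then show "y \<in> s_fun N ` {a..b}"
      by auto
  qed
qed

lemma integral_s_fun_substitution:
  fixes h :: "real \<Rightarrow> real"
  assumes N: "3 \<le> N" and ab: "0 < a" "a \<le> b"
    and cont: "continuous_on {s_fun N a..s_fun N b} h"
    and zero: "\<And>y. y \<notin> {s_fun N a..s_fun N b} \<Longrightarrow> h y = 0"
  shows "integral {0<..} h = integral {a..b} (\<lambda>r. (s_fun N r / sinh r)^(N - 1) * h (s_fun N r))"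
proof -
  have "((\<lambda>r. (s_fun N r / sinh r)^(N - 1) *\<^sub>R h (s_fun N r)) has_integral
      integral {s_fun N a..s_fun N b} h) {a..b}"
  proof (rule has_integral_substitution[OF ab(2) s_fun_mono[OF N ab] _ cont])
    show "s_fun N ` {a..b} \<subseteq> {s_fun N a..s_fun N b}"
      using s_fun_image[OF N ab] by simp
    show "(s_fun N has_real_derivative (s_fun N x / sinh x)^(N - 1)) (at x within {a..b})"
      if "x \<in> {a..b}" for x
      using that ab has_real_derivative_s_fun[OF N, of x] by (simp add: has_field_derivative_at_within)
  qed
  moreover have "(h has_integral integral {s_fun N a..s_fun N b} h) {0<..}"
  proof (rule has_integral_on_superset[OF integrable_integral[OF integrable_continuous_interval[OF cont]]])
    show "{s_fun N a..s_fun N b} \<subseteq> {0<..}"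
      using s_fun_pos[OF N ab(1)] by auto
  qed (use zero in blast)
  ultimately show ?thesis
    by (simp add: integral_unique)
qed

lemma r_fun_on_s_fun_interval:
  assumes N: "3 \<le> N" and ab: "0 < a" "a \<le> b"
  shows "continuous_on {s_fun N a..s_fun N b} (r_fun N)"
    and "\<And>y. y \<in> {s_fun N a..s_fun N b} \<Longrightarrow> r_fun N y \<in> {a..b}"
proof -
  have inv: "\<forall>x\<in>{a..b}. r_fun N (s_fun N x) = x"
    using r_fun_s_fun[OF N] ab by auto
  show "continuous_on {s_fun N a..s_fun N b} (r_fun N)"
    using continuous_on_inv[OF continuous_on_s_fun[OF N ab(1)] compact_Icc inv]
    unfolding s_fun_image[OF N ab] .
  show "r_fun N y \<in> {a..b}" if "y \<in> {s_fun N a..s_fun N b}" for y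
    using that inv unfolding s_fun_image[OF N ab, symmetric] by auto
qed

lemma has_real_derivative_s_fun_jacobian:
  assumes N: "3 \<le> N" and r: "0 < r"
  defines "J \<equiv> \<lambda>r. (s_fun N r / sinh r)^(N - 1)"
  shows "(J has_real_derivative
      real (N - 1) * J r^2 / s_fun N r - real (N - 1) * (cosh r / sinh r) * J r) (at r)"
proof -
  define q where "q r = s_fun N r / sinh r" for r
  have sh: "0 < sinh r" and s: "0 < s_fun N r"
    using r s_fun_pos[OF N r] by auto
  have "(q has_real_derivative J r / sinh r - s_fun N r * cosh r / sinh r^2) (at r)"
    unfolding q_def[abs_def] J_def using has_real_derivative_s_fun[OF N r] sh
    by (auto intro!: derivative_eq_intros simp: field_simps power2_eq_square)
  also have "J r / sinh r - s_fun N r * cosh r / sinh r^2 = q r * (J r / s_fun N r - cosh r / sinh r)"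
    unfolding q_def using sh s by (simp add: field_simps power2_eq_square)
  finally have "((\<lambda>r. q r ^ (N - 1)) has_real_derivative
      real (N - 1) * (q r * (J r / s_fun N r - cosh r / sinh r) * q r ^ (N - 1 - Suc 0))) (at r)"
    by (rule DERIV_power)
  moreover have "q r ^ (N - 1 - Suc 0) * q r = J r"
  proof -
    obtain j where "N - 1 = Suc j" using N by (cases "N - 1") auto
    then show ?thesis
      unfolding J_def q_def by simp
  qed
  then have "real (N - 1) * (q r * (J r / s_fun N r - cosh r / sinh r) * q r ^ (N - 1 - Suc 0))
      = real (N - 1) * J r^2 / s_fun N r - real (N - 1) * (cosh r / sinh r) * J r"
    by (simp add: power2_eq_square algebra_simps diff_divide_distrib)
  ultimately show ?thesis
    unfolding J_def q_def by simp
qed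

lemma comp_s_fun_derivatives:
  fixes v :: "real \<Rightarrow> real"
  assumes N: "3 \<le> N" and r: "0 < r"
    and dv: "\<And>x. (v has_real_derivative deriv v x) (at x)"
    and ddv: "\<And>x. (deriv v has_real_derivative deriv (deriv v) x) (at x)"
  defines "J \<equiv> \<lambda>r. (s_fun N r / sinh r)^(N - 1)"
  defines "J' \<equiv> \<lambda>r. real (N - 1) * J r^2 / s_fun N r - real (N - 1) * (cosh r / sinh r) * J r"
  shows "(v \<circ> s_fun N has_real_derivative deriv (v \<circ> s_fun N) r) (at r)"
    and "deriv (v \<circ> s_fun N) r = deriv v (s_fun N r) * J r"
    and "(deriv (v \<circ> s_fun N) has_real_derivative
        deriv (deriv v) (s_fun N r) * J r^2 + deriv v (s_fun N r) * J' r) (at r)"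
    and "deriv (deriv (v \<circ> s_fun N)) r
        = deriv (deriv v) (s_fun N r) * J r^2 + deriv v (s_fun N r) * J' r"
    and "(deriv (v \<circ> s_fun N) has_real_derivative deriv (deriv (v \<circ> s_fun N)) r) (at r)"
proof -
  have dU: "(v \<circ> s_fun N has_real_derivative deriv v (s_fun N x) * J x) (at x)" if "0 < x" for x
    unfolding J_def comp_def using DERIV_chain2[OF dv has_real_derivative_s_fun[OF N that]] .
  then have deriv_U: "deriv (v \<circ> s_fun N) x = deriv v (s_fun N x) * J x" if "0 < x" for x
    using that by (simp add: DERIV_imp_deriv)
  show "(v \<circ> s_fun N has_real_derivative deriv (v \<circ> s_fun N) r) (at r)"
    and "deriv (v \<circ> s_fun N) r = deriv v (s_fun N r) * J r"
    using dU[OF r] deriv_U[OF r] by simp_all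
  have "((\<lambda>x. deriv v (s_fun N x) * J x) has_real_derivative
      deriv (deriv v) (s_fun N r) * J r^2 + deriv v (s_fun N r) * J' r) (at r)"
    using DERIV_mult[OF DERIV_chain2[OF ddv has_real_derivative_s_fun[OF N r]]
        has_real_derivative_s_fun_jacobian[OF N r]]
    unfolding J_def J'_def by (simp add: ac_simps power2_eq_square)
  then show d2: "(deriv (v \<circ> s_fun N) has_real_derivative
      deriv (deriv v) (s_fun N r) * J r^2 + deriv v (s_fun N r) * J' r) (at r)"
  proof (rule has_field_derivative_transform_within_open)
    show "open {0::real<..}" "r \<in> {0<..}"
      using r by (auto simp: open_greaterThan)
  qed (use deriv_U in simp)
  then show d2': "deriv (deriv (v \<circ> s_fun N)) r
      = deriv (deriv v) (s_fun N r) * J r^2 + deriv v (s_fun N r) * J' r"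
    by (rule DERIV_imp_deriv)
  from d2 show "(deriv (v \<circ> s_fun N) has_real_derivative deriv (deriv (v \<circ> s_fun N)) r) (at r)"
    unfolding d2' .
qed

lemma rad_lap_comp_s_fun:
  fixes v :: "real \<Rightarrow> real"
  assumes N: "3 \<le> N" and r: "0 < r"
    and dv: "\<And>x. (v has_real_derivative deriv v x) (at x)"
    and ddv: "\<And>x. (deriv v has_real_derivative deriv (deriv v) x) (at x)"
  shows "deriv (deriv (v \<circ> s_fun N)) r + real (N - 1) * (cosh r / sinh r) * deriv (v \<circ> s_fun N) r
      = ((s_fun N r / sinh r)^(N - 1))^2 * rad_lap N v (s_fun N r)"
proof -
  have factor: "A * J^2 + B * (k * J^2 / s - k * c * J) + k * c * (B * J) = J^2 * (A + k / s * B)"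
    for A B J k s c :: real
    by (simp add: algebra_simps)
  have "real N - 1 = real (N - 1)"
    using N by (simp add: of_nat_diff)
  then show ?thesis
    unfolding comp_s_fun_derivatives(2,4)[OF N r dv ddv] rad_lap_def
    by (simp only: factor)
qed

lemma continuous_on_deriv2_comp_s_fun:
  fixes v :: "real \<Rightarrow> real"
  assumes N: "3 \<le> N" and a: "0 < a"
    and dv: "\<And>x. (v has_real_derivative deriv v x) (at x)"
    and ddv: "\<And>x. (deriv v has_real_derivative deriv (deriv v) x) (at x)"
    and cont: "continuous_on UNIV (deriv (deriv v))"
  shows "continuous_on {a..b} (deriv (deriv (v \<circ> s_fun N)))"
proof -
  define J where "J r = (s_fun N r / sinh r)^(N - 1)" for r
  define coth where "coth r = cosh r / sinh r" for r :: real
  have s: "continuous_on {a..b} (s_fun N)"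
    using continuous_on_s_fun[OF N a] .
  have "continuous_on UNIV (deriv v)"
    using ddv DERIV_isCont by (metis continuous_at_imp_continuous_on)
  then have "continuous_on {a..b} (\<lambda>r. deriv v (s_fun N r))"
    and "continuous_on {a..b} (\<lambda>r. deriv (deriv v) (s_fun N r))"
    using continuous_on_compose2[OF _ s] cont by auto
  moreover have "continuous_on {a..b} J" "continuous_on {a..b} coth"
    unfolding J_def[abs_def] coth_def[abs_def] using a by (auto intro!: continuous_intros s)
  moreover have "\<forall>r\<in>{a..b}. s_fun N r \<noteq> 0"
    using a s_fun_pos[OF N] by (metis atLeastAtMost_iff less_le_trans less_numeral_extra(3))
  ultimately have "continuous_on {a..b} (\<lambda>r. deriv (deriv v) (s_fun N r) * (J r)^2
      + deriv v (s_fun N r) * (real (N - 1) * (J r)^2 / s_fun N r - real (N - 1) * coth r * J r))"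
    by (intro continuous_on_add continuous_on_mult continuous_on_diff continuous_on_divide
        continuous_on_power continuous_on_const s) auto
  then show ?thesis
    by (rule continuous_on_eq)
      (use a comp_s_fun_derivatives(4)[OF N _ dv ddv] in \<open>simp add: J_def coth_def\<close>)
qed

lemma integral_rho_weighted_s_fun:
  fixes v w :: "real \<Rightarrow> real"
  assumes N: "3 \<le> N" and ab: "0 < a" "a \<le> b"
    and cont_v: "continuous_on {s_fun N a..s_fun N b} v"
    and zero: "\<And>y. y \<notin> {s_fun N a..s_fun N b} \<Longrightarrow> v y = 0"
    and cont_w: "continuous_on {a..b} w" and w: "\<And>r. r \<in> {a..b} \<Longrightarrow> 0 < w r"
  shows "integral {0<..} (\<lambda>s. rho N s / w (r_fun N s) * (v s)^2 * s^(N - 1))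
      = integral {a..b} (\<lambda>r. v (s_fun N r)^2 * sinh r^(N - 1) / w r)"
proof -
  have s_pos: "0 < y" if "y \<in> {s_fun N a..s_fun N b}" for y
    using that s_fun_pos[OF N ab(1)] by auto
  note r_fun = r_fun_on_s_fun_interval[OF N ab]
  have "integral {0<..} (\<lambda>s. rho N s / w (r_fun N s) * (v s)^2 * s^(N - 1))
      = integral {a..b} (\<lambda>r. (s_fun N r / sinh r)^(N - 1) * (rho N (s_fun N r)
          / w (r_fun N (s_fun N r)) * v (s_fun N r)^2 * s_fun N r^(N - 1)))"
  proof (rule integral_s_fun_substitution[OF N ab])
    have "continuous_on {s_fun N a..s_fun N b} (\<lambda>y. w (r_fun N y))"
      using r_fun(2) by (intro continuous_on_compose2[OF cont_w r_fun(1)]) auto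
    then show "continuous_on {s_fun N a..s_fun N b}
        (\<lambda>s. rho N s / w (r_fun N s) * (v s)^2 * s^(N - 1))"
      unfolding rho_def using s_pos w r_fun(2)
      by (intro continuous_intros cont_v r_fun(1)) (auto simp: less_imp_neq[symmetric])
  qed (use zero in simp)
  also have "\<dots> = integral {a..b} (\<lambda>r. v (s_fun N r)^2 * sinh r^(N - 1) / w r)"
  proof (intro integral_cong)
    fix r assume r: "r \<in> {a..b}"
    then have "0 < r" "0 < s_fun N r" "0 < sinh r"
      using ab s_fun_pos[OF N] by auto
    then show "(s_fun N r / sinh r)^(N - 1) * (rho N (s_fun N r) / w (r_fun N (s_fun N r))
        * v (s_fun N r)^2 * s_fun N r^(N - 1)) = v (s_fun N r)^2 * sinh r^(N - 1) / w r"
      unfolding rho_def r_fun_s_fun[OF N \<open>0 < r\<close>]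
      by (simp add: power_mult power_divide field_simps power2_eq_square)
  qed
  finally show ?thesis .
qed

lemma continuous_on_rad_lap:
  assumes "continuous_on S (deriv v)" "continuous_on S (deriv (deriv v))" "0 \<notin> S"
  shows "continuous_on S (rad_lap N v)"
proof -
  have "continuous_on S (\<lambda>s. (real N - 1) / s)"
    using assms(3) by (intro continuous_intros) auto
  with assms(1,2) show ?thesis
    unfolding rad_lap_def[abs_def] by (intro continuous_on_add continuous_on_mult)
qed

lemma integral_rad_lap_s_fun:
  fixes v :: "real \<Rightarrow> real"
  assumes N: "3 \<le> N" and ab: "0 < a" "a \<le> b"
    and dv: "\<And>x. (v has_real_derivative deriv v x) (at x)"
    and ddv: "\<And>x. (deriv v has_real_derivative deriv (deriv v) x) (at x)"
    and cont: "continuous_on UNIV (deriv (deriv v))"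
    and zero: "\<And>y. y \<notin> {s_fun N a..s_fun N b} \<Longrightarrow> rad_lap N v y = 0"
  shows "integral {0<..} (\<lambda>s. 1 / rho N s * (rad_lap N v s)^2 * s^(N - 1))
      = integral {a..b} (\<lambda>r. (deriv (deriv (v \<circ> s_fun N)) r
          + real (N - 1) * (cosh r / sinh r) * deriv (v \<circ> s_fun N) r)^2 * sinh r^(N - 1))"
proof -
  have s_pos: "0 < y" if "y \<in> {s_fun N a..s_fun N b}" for y
    using that s_fun_pos[OF N ab(1)] by auto
  note r_fun = r_fun_on_s_fun_interval[OF N ab]
  have "integral {0<..} (\<lambda>s. 1 / rho N s * (rad_lap N v s)^2 * s^(N - 1))
      = integral {a..b} (\<lambda>r. (s_fun N r / sinh r)^(N - 1) * (1 / rho N (s_fun N r)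
          * (rad_lap N v (s_fun N r))^2 * s_fun N r^(N - 1)))"
  proof (rule integral_s_fun_substitution[OF N ab])
    have "continuous_on UNIV (deriv v)"
      using ddv DERIV_isCont by (metis continuous_at_imp_continuous_on)
    then have "continuous_on {s_fun N a..s_fun N b} (rad_lap N v)"
      using cont s_pos by (intro continuous_on_rad_lap) (auto intro: continuous_on_subset)
    then show "continuous_on {s_fun N a..s_fun N b}
        (\<lambda>s. 1 / rho N s * (rad_lap N v s)^2 * s^(N - 1))"
      unfolding rho_def using s_pos ab
      by (intro continuous_intros r_fun(1)) (auto simp: less_imp_neq[symmetric] dest!: r_fun(2))
  qed (use zero in simp)
  also have "\<dots> = integral {a..b} (\<lambda>r. (deriv (deriv (v \<circ> s_fun N)) r
      + real (N - 1) * (cosh r / sinh r) * deriv (v \<circ> s_fun N) r)^2 * sinh r^(N - 1))"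
  proof (intro integral_cong)
    fix r assume r: "r \<in> {a..b}"
    then have "0 < r" "0 < s_fun N r" "0 < sinh r"
      using ab s_fun_pos[OF N] by auto
    then show "(s_fun N r / sinh r)^(N - 1) * (1 / rho N (s_fun N r)
        * (rad_lap N v (s_fun N r))^2 * s_fun N r^(N - 1))
        = (deriv (deriv (v \<circ> s_fun N)) r
          + real (N - 1) * (cosh r / sinh r) * deriv (v \<circ> s_fun N) r)^2 * sinh r^(N - 1)"
      unfolding rho_def r_fun_s_fun[OF N \<open>0 < r\<close>] rad_lap_comp_s_fun[OF N \<open>0 < r\<close> dv ddv]
      by (simp add: power_mult power_divide field_simps power2_eq_square)
  qed
  finally show ?thesis .
qed

lemma s_fun_interval_cover:
  assumes N: "3 \<le> N" and ab: "0 < a" "a \<le> b"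
  obtains \<alpha> \<beta> where "0 < \<alpha>" "\<alpha> \<le> \<beta>" "{a..b} \<subseteq> {s_fun N \<alpha><..<s_fun N \<beta>}"
proof -
  obtain \<alpha> where \<alpha>: "0 < \<alpha>" "s_fun N \<alpha> < a"
    using s_fun_less[OF N ab(1)] .
  obtain \<beta> where \<beta>: "1 \<le> \<beta>" "b < s_fun N \<beta>"
    using s_fun_greater[OF N, of b] ab by auto
  have "\<alpha> \<le> \<beta>"
    using s_fun_mono[OF N, of \<beta> \<alpha>] \<alpha> \<beta> ab by fastforce
  with \<alpha> \<beta> show ?thesis
    using that by fastforce
qed

lemma weighted_rellich_supported:
  fixes N :: nat and v :: "real \<Rightarrow> real"
  assumes "5 \<le> N" and \<alpha>\<beta>: "0 < \<alpha>" "\<alpha> \<le> \<beta>"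
    and dv: "\<And>x. (v has_real_derivative deriv v x) (at x)"
    and ddv: "\<And>x. (deriv v has_real_derivative deriv (deriv v) x) (at x)"
    and cont: "continuous_on UNIV (deriv (deriv v))"
    and supp: "\<And>y. y \<notin> {s_fun N \<alpha><..<s_fun N \<beta>} \<Longrightarrow>
      v y = 0 \<and> deriv v y = 0 \<and> deriv (deriv v) y = 0"
  shows "integral {0<..} (\<lambda>s. (1 / rho N s) * (rad_lap N v s)^2 * s ^ (N - 1))
     \<ge> (real N - 1)^4 / 16 * integral {0<..} (\<lambda>s. rho N s * (v s)^2 * s ^ (N - 1))
       + 9 / 16 * integral {0<..} (\<lambda>s. rho N s / (r_fun N s)^4 * (v s)^2 * s ^ (N - 1))
       + (real N - 1)^2 / 8 * integral {0<..} (\<lambda>s. rho N s / (r_fun N s)^2 * (v s)^2 * s ^ (N - 1))"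
proof -
  have N: "3 \<le> N" and k: "4 \<le> N - 1" and k_eq: "real N - 1 = real (N - 1)"
    using assms(1) by (auto simp: of_nat_diff)
  have out: "\<And>y. y \<notin> {s_fun N \<alpha>..s_fun N \<beta>} \<Longrightarrow> y \<notin> {s_fun N \<alpha><..<s_fun N \<beta>}"
    by auto
  note U = comp_s_fun_derivatives[OF N _ dv ddv]
  have "real (N - 1)^4 / 16 * integral {\<alpha>..\<beta>} (\<lambda>r. (v \<circ> s_fun N) r^2 * sinh r^(N - 1))
      + 9 / 16 * integral {\<alpha>..\<beta>} (\<lambda>r. (v \<circ> s_fun N) r^2 * sinh r^(N - 1) / r^4)
      + real (N - 1)^2 / 8 * integral {\<alpha>..\<beta>} (\<lambda>r. (v \<circ> s_fun N) r^2 * sinh r^(N - 1) / r^2)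
    \<le> integral {\<alpha>..\<beta>} (\<lambda>r. (deriv (deriv (v \<circ> s_fun N)) r
      + real (N - 1) * (cosh r / sinh r) * deriv (v \<circ> s_fun N) r)^2 * sinh r^(N - 1))"
    using \<alpha>\<beta> U(2)[of \<alpha>] U(2)[of \<beta>] supp[of "s_fun N \<alpha>"] supp[of "s_fun N \<beta>"]
    by (intro rellich_hyperbolic k U(1,5) continuous_on_deriv2_comp_s_fun[OF N _ dv ddv cont]) auto
  moreover have weighted: "integral {0<..} (\<lambda>s. rho N s / w (r_fun N s) * (v s)^2 * s^(N - 1))
      = integral {\<alpha>..\<beta>} (\<lambda>r. v (s_fun N r)^2 * sinh r^(N - 1) / w r)"
    if "w = (\<lambda>_. 1) \<or> w = (\<lambda>r. r^4) \<or> w = (\<lambda>r. r^2)" for w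
    using that \<alpha>\<beta> supp[OF out] DERIV_isCont[OF dv]
    by (intro integral_rho_weighted_s_fun[OF N] continuous_at_imp_continuous_on)
      (auto intro!: continuous_intros)
  ultimately show ?thesis
    using integral_rad_lap_s_fun[OF N \<alpha>\<beta> dv ddv cont] weighted[of "\<lambda>_. 1"]
      weighted[of "\<lambda>r. r^4"] weighted[of "\<lambda>r. r^2"] supp[OF out]
    by (auto simp: k_eq rad_lap_def)
qed

theorem proposition6p3:
  fixes N :: nat and v :: "real \<Rightarrow> real"
  assumes "N \<ge> 5" and "Cc_inf_pos v"
  shows "integral {0<..} (\<lambda>s. (1 / rho N s) * (rad_lap N v s)^2 * s ^ (N - 1))
     \<ge> (real N - 1)^4 / 16 * integral {0<..} (\<lambda>s. rho N s * (v s)^2 * s ^ (N - 1))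
       + 9 / 16 * integral {0<..} (\<lambda>s. rho N s / (r_fun N s)^4 * (v s)^2 * s ^ (N - 1))
       + (real N - 1)^2 / 8 * integral {0<..} (\<lambda>s. rho N s / (r_fun N s)^2 * (v s)^2 * s ^ (N - 1))"
proof -
  obtain a b where ab: "0 < a" "a \<le> b"
    and dv: "\<And>x. (v has_real_derivative deriv v x) (at x)"
    and ddv: "\<And>x. (deriv v has_real_derivative deriv (deriv v) x) (at x)"
    and cont: "continuous_on UNIV (deriv (deriv v))"
    and supp: "\<And>x. x \<notin> {a..b} \<Longrightarrow> v x = 0" "\<And>x. x \<notin> {a..b} \<Longrightarrow> deriv v x = 0"
      "\<And>x. x \<notin> {a..b} \<Longrightarrow> deriv (deriv v) x = 0"
    using Cc_inf_posE[OF assms(2)] by blast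
  obtain \<alpha> \<beta> where "0 < \<alpha>" "\<alpha> \<le> \<beta>" and cover: "{a..b} \<subseteq> {s_fun N \<alpha><..<s_fun N \<beta>}"
    using s_fun_interval_cover[of N, OF _ ab] assms(1) by auto
  moreover have "y \<notin> {a..b}" if "y \<notin> {s_fun N \<alpha><..<s_fun N \<beta>}" for y
    using that cover by auto
  ultimately show ?thesis
    using assms(1) supp dv ddv cont by (intro weighted_rellich_supported) auto
qed

end
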